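(* Consider the system $\dot x=-\nabla\psi(x)+Jx+Bu$ on $\mathbb R^n$, where $\psi:\mathbb R^n\to\mathbb R$ is continuously differentiable and strictly convex with $\lim_{\|x\|\to\infty}\psi(x)/\|x\|=\infty$, $J\in\mathbb R^{n\times n}$ is skew-symmetric, $B\in\mathbb R^{n\times m}$, and the input $u\in\mathbb R^m$ is constant. Then there exists a unique point $x_0\in\mathbb R^n$ (depending on $u$) such that every solution $x(t)$ of the system converges to $x_0$ as $t\to\infty$. *)

theory Defs
  imports "HOL-Analysis.Analysis"
begin

definition strictly_convex_on :: "'a::real_vector set \<Rightarrow> ('a \<Rightarrow> real) \<Rightarrow> bool" where
  "strictly_convex_on S f \<longleftrightarrow>
     (\<forall>x\<in>S. \<forall>y\<in>S. x \<noteq> y \<longrightarrow> (\<forall>t::real. 0 < t \<and> t < 1 \<longrightarrow>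
        f ((1 - t) *\<^sub>R x + t *\<^sub>R y) < (1 - t) * f x + t * f y))"

end

theory Submission
  imports Defs
begin

(*
  Write F x = grad \<psi> x - J x. Strict convexity makes grad \<psi> strictly monotone and skew-symmetry
  makes J invisible in <F x - F y, x - y>, so F is strictly monotone. Superlinear growth of \<psi>
  gives <F x - B u, x> > 0 on a large sphere, hence by Brouwer's theorem an equilibrium x0 with
  F x0 = B u. Along any solution, V = |x - x0|^2 has derivative -2 <grad \<psi> x - grad \<psi> x0, x - x0>,
  which is nonpositive and bounded away from zero on the compact annulus where the trajectory
  would stay if it never came close to x0; so V tends to 0. The constant solution x0 forces
  uniqueness.
*)

lemma skew_symmetric_inner_self:
  fixes J :: "real^'n^'n"
  assumes "transpose J = - J"
  shows "x \<bullet> (J *v x) = 0"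
proof -
  have "x \<bullet> (J *v x) = (transpose J *v x) \<bullet> x"
    by (simp flip: dot_lmul_matrix add: inner_commute)
  also have "\<dots> = - (x \<bullet> (J *v x))"
    using matrix_vector_mult_diff_rdistrib[of 0 J x] assms by (simp add: inner_commute)
  finally show ?thesis by simp
qed

lemma strictly_convex_on_imp_convex_on:
  assumes "strictly_convex_on S f" and "convex S"
  shows "convex_on S f"
proof (rule convex_onI[OF _ assms(2)])
  fix t :: real and x y assume "0 < t" "t < 1" "x \<in> S" "y \<in> S"
  then show "f ((1 - t) *\<^sub>R x + t *\<^sub>R y) \<le> (1 - t) * f x + t * f y"
    using assms(1) unfolding strictly_convex_on_def
    by (cases "x = y") (auto simp: algebra_simps simp flip: scaleR_add_left intro: less_imp_le)
qed

lemma convex_on_along_line: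
  assumes "convex_on UNIV f"
  shows "convex_on UNIV (\<lambda>t::real. f (x + t *\<^sub>R d))"
proof (rule convex_onI)
  fix t a b :: real assume "0 < t" "t < 1"
  have "x + ((1 - t) *\<^sub>R a + t *\<^sub>R b) *\<^sub>R d = (1 - t) *\<^sub>R (x + a *\<^sub>R d) + t *\<^sub>R (x + b *\<^sub>R d)"
    by (simp add: algebra_simps)
  then show "f (x + ((1 - t) *\<^sub>R a + t *\<^sub>R b) *\<^sub>R d) \<le> (1 - t) * f (x + a *\<^sub>R d) + t * f (x + b *\<^sub>R d)"
    using convex_onD[OF assms, of t] \<open>0 < t\<close> \<open>t < 1\<close> by simp
qed simp

lemma convex_on_gradient_inequality:
  fixes f :: "'a::real_inner \<Rightarrow> real"
  assumes "convex_on UNIV f" and "(f has_derivative (\<lambda>h. g \<bullet> h)) (at x)"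
  shows "f x + g \<bullet> (y - x) \<le> f y"
proof -
  define \<phi> where "\<phi> t = f (x + t *\<^sub>R (y - x))" for t :: real
  have "((\<lambda>t::real. x + t *\<^sub>R (y - x)) has_derivative (\<lambda>h. h *\<^sub>R (y - x))) (at 0)"
    by (auto intro!: derivative_eq_intros)
  moreover have "(f has_derivative (\<lambda>h. g \<bullet> h)) (at (x + 0 *\<^sub>R (y - x)))"
    using assms(2) by simp
  ultimately have "(\<phi> has_derivative (\<lambda>h. g \<bullet> (h *\<^sub>R (y - x)))) (at 0)"
    unfolding \<phi>_def by (rule has_derivative_compose)
  then have "(\<phi> has_real_derivative (g \<bullet> (y - x))) (at 0)"
    unfolding has_field_derivative_def by (simp add: mult.commute[of _ "g \<bullet> (y - x)"])
  moreover have "convex_on UNIV \<phi>"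
    unfolding \<phi>_def using assms(1) by (rule convex_on_along_line)
  ultimately have "g \<bullet> (y - x) * (1 - 0) \<le> \<phi> 1 - \<phi> 0"
    by (intro convex_on_imp_above_tangent) auto
  then show ?thesis unfolding \<phi>_def by simp
qed

lemma strictly_convex_on_gradient_inequality:
  fixes f :: "'a::real_inner \<Rightarrow> real"
  assumes "strictly_convex_on UNIV f" and "(f has_derivative (\<lambda>h. g \<bullet> h)) (at x)"
    and "x \<noteq> y"
  shows "f x + g \<bullet> (y - x) < f y"
proof -
  define m where "m = (1 - 1/2) *\<^sub>R x + (1/2::real) *\<^sub>R y"
  have "\<forall>t. 0 < t \<and> t < 1 \<longrightarrow> f ((1 - t) *\<^sub>R x + t *\<^sub>R y) < (1 - t) * f x + t * f y"
    using assms(1,3) unfolding strictly_convex_on_def by blast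
  from spec[OF this, of "1/2"] have "f m < (1 - 1/2) * f x + (1/2) * f y"
    unfolding m_def by simp
  moreover have "f x + g \<bullet> (m - x) \<le> f m"
    using assms(1,2) by (intro convex_on_gradient_inequality strictly_convex_on_imp_convex_on) auto
  moreover have "m - x = (1/2) *\<^sub>R (y - x)"
    unfolding m_def by (simp add: algebra_simps flip: scaleR_add_left)
  ultimately show ?thesis by (simp add: inner_scaleR_right)
qed

lemma strictly_convex_on_gradient_strictly_monotone:
  fixes f :: "'a::real_inner \<Rightarrow> real"
  assumes "strictly_convex_on UNIV f" and "\<And>x. (f has_derivative (\<lambda>h. g x \<bullet> h)) (at x)"
    and "x \<noteq> y"
  shows "0 < (g x - g y) \<bullet> (x - y)"
proof -
  have "f x + g x \<bullet> (y - x) < f y" "f y + g y \<bullet> (x - y) < f x"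
    using assms by (auto intro!: strictly_convex_on_gradient_inequality)
  moreover have "g x \<bullet> (y - x) = - (g x \<bullet> (x - y))"
    by (simp add: inner_diff_right)
  ultimately show ?thesis by (simp add: inner_diff_left)
qed

lemma outward_field_has_zero:
  fixes F :: "'a::euclidean_space \<Rightarrow> 'a"
  assumes "continuous_on (cball 0 R) F" and "0 < R" and "\<And>x. norm x = R \<Longrightarrow> 0 < F x \<bullet> x"
  shows "\<exists>x\<in>cball 0 R. F x = 0"
proof (rule ccontr)
  assume "\<not> ?thesis"
  then have nz: "F x \<noteq> 0" if "x \<in> cball 0 R" for x
    using that by blast
  define f where "f x = (- R / norm (F x)) *\<^sub>R F x" for x
  have "continuous_on (cball 0 R) f"
    unfolding f_def using nz by (auto intro!: continuous_intros assms(1))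
  moreover have "f \<in> cball 0 R \<rightarrow> cball 0 R"
    unfolding f_def using assms(2) nz by auto
  ultimately obtain x where x: "x \<in> cball 0 R" "f x = x"
    using brouwer[of "cball 0 R" f] assms(2) by auto
  have "norm (f x) = R"
    using assms(2) nz[OF x(1)] unfolding f_def by simp
  then have "norm x = R"
    using x(2) by simp
  have "F x \<bullet> x = (- R / norm (F x)) * (F x \<bullet> F x)"
    using x(2) unfolding f_def by (metis inner_scaleR_right)
  also have "\<dots> < 0"
    using assms(2) nz[OF x(1)] by (simp add: divide_neg_pos mult_neg_pos)
  finally show False
    using assms(3)[OF \<open>norm x = R\<close>] by simp
qed

lemma superlinear_convex_gradient_coercive:
  fixes f :: "'a::real_inner \<Rightarrow> real"
  assumes "convex_on UNIV f" and "\<And>x. (f has_derivative (\<lambda>h. g x \<bullet> h)) (at x)"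
    and "filterlim (\<lambda>x. f x / norm x) at_top at_infinity"
  shows "\<forall>\<^sub>F x in at_infinity. c * norm x < g x \<bullet> x"
proof -
  have "\<forall>\<^sub>F x in at_infinity. c + \<bar>f 0\<bar> + 1 \<le> f x / norm x"
    using assms(3) unfolding filterlim_at_top by blast
  then obtain r where r: "\<And>x. r \<le> norm x \<Longrightarrow> c + \<bar>f 0\<bar> + 1 \<le> f x / norm x"
    unfolding eventually_at_infinity by blast
  have "c * norm x < g x \<bullet> x" if x: "max r 1 \<le> norm x" for x
  proof -
    have "0 < norm x"
      using x by linarith
    then have "(c + \<bar>f 0\<bar> + 1) * norm x \<le> f x"
      using r[of x] x by (simp add: le_divide_eq)
    moreover have "f x + g x \<bullet> (0 - x) \<le> f 0"
      using assms(1,2) by (rule convex_on_gradient_inequality)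
    moreover have "\<bar>f 0\<bar> + 1 \<le> (\<bar>f 0\<bar> + 1) * norm x"
      using x mult_left_mono[of 1 "norm x" "\<bar>f 0\<bar> + 1"] by simp
    ultimately show ?thesis
      by (simp add: algebra_simps inner_minus_right)
  qed
  then show ?thesis
    unfolding eventually_at_infinity by blast
qed

lemma surj_gradient_minus_skew:
  fixes f :: "real^'n \<Rightarrow> real" and J :: "real^'n^'n"
  assumes grad: "\<And>x. (f has_derivative (\<lambda>h. g x \<bullet> h)) (at x)"
    and cont: "continuous_on UNIV g"
    and cvx: "convex_on UNIV f"
    and superlinear: "filterlim (\<lambda>x. f x / norm x) at_top at_infinity"
    and skew: "transpose J = - J"
  shows "surj (\<lambda>x. g x - J *v x)"
proof -
  have "\<exists>x. b = g x - J *v x" for b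
  proof -
    obtain r where r: "\<And>x. r \<le> norm x \<Longrightarrow> norm b * norm x < g x \<bullet> x"
      using superlinear_convex_gradient_coercive[OF cvx grad superlinear, of "norm b"]
      unfolding eventually_at_infinity by blast
    define R where "R = max r 1"
    have "0 < (g x - J *v x - b) \<bullet> x" if "norm x = R" for x
    proof -
      have "norm b * norm x < g x \<bullet> x"
        using r[of x] that unfolding R_def by simp
      moreover have "b \<bullet> x \<le> norm b * norm x"
        by (rule norm_cauchy_schwarz)
      moreover have "(J *v x) \<bullet> x = 0"
        using skew_symmetric_inner_self[OF skew] by (simp add: inner_commute)
      ultimately show ?thesis
        by (simp add: inner_diff_left)
    qed
    moreover have "continuous_on (cball 0 R) (\<lambda>x. g x - J *v x - b)"
      by (intro continuous_intros continuous_on_subset[OF cont]) auto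
    moreover have "0 < R"
      unfolding R_def by simp
    ultimately obtain x where "g x - J *v x - b = 0"
      using outward_field_has_zero[of R "\<lambda>x. g x - J *v x - b"] by blast
    then show ?thesis
      by auto
  qed
  then show ?thesis
    unfolding surj_def by blast
qed

lemma nonpos_derivative_imp_nonincreasing:
  fixes f :: "real \<Rightarrow> real"
  assumes deriv: "\<And>t. a \<le> t \<Longrightarrow> (f has_real_derivative f' t) (at t within {a..})"
    and nonpos: "\<And>t. a \<le> t \<Longrightarrow> f' t \<le> 0"
    and "a \<le> s" "s \<le> t"
  shows "f t \<le> f s"
proof (rule DERIV_nonpos_imp_decreasing_open[OF \<open>s \<le> t\<close>])
  fix r assume r: "s < r" "r < t"
  then have "at r within {a..} = at r"
    using \<open>a \<le> s\<close> by (intro at_within_interior) auto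
  then show "\<exists>y. (f has_real_derivative y) (at r) \<and> y \<le> 0"
    using deriv[of r] nonpos[of r] r \<open>a \<le> s\<close> by auto
next
  have "continuous_on {a..} f"
    using deriv by (auto simp: continuous_on_eq_continuous_within intro: DERIV_continuous)
  then show "continuous_on {s..t} f"
    by (rule continuous_on_subset) (use \<open>a \<le> s\<close> in auto)
qed

lemma flow_distance_square_derivative:
  fixes J :: "real^'n^'n"
  assumes skew: "transpose J = - J" and eq: "g xs - J *v xs = b"
    and sol: "(x has_vector_derivative (- g (x t) + J *v x t + b)) (at t within S)"
  shows "((\<lambda>s. (norm (x s - xs))\<^sup>2) has_real_derivative
           - 2 * ((g (x t) - g xs) \<bullet> (x t - xs))) (at t within S)"
proof -
  define v where "v = - g (x t) + J *v x t + b"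
  have "v = - (g (x t) - g xs) + J *v (x t - xs)"
    unfolding v_def using eq by (auto simp: matrix_vector_mult_diff_distrib algebra_simps)
  then have v: "(x t - xs) \<bullet> v = - ((g (x t) - g xs) \<bullet> (x t - xs))"
    using skew_symmetric_inner_self[OF skew, of "x t - xs"]
    by (simp add: inner_add_right inner_diff_right inner_commute)
  have "((\<lambda>s. x s - xs) has_vector_derivative v) (at t within S)"
    using sol unfolding v_def has_vector_derivative_diff_const .
  then have d: "((\<lambda>s. x s - xs) has_derivative (\<lambda>h. h *\<^sub>R v)) (at t within S)"
    unfolding has_vector_derivative_def .
  have "((\<lambda>s. (x s - xs) \<bullet> (x s - xs)) has_derivative
               (\<lambda>h. (x t - xs) \<bullet> (h *\<^sub>R v) + (h *\<^sub>R v) \<bullet> (x t - xs))) (at t within S)"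
    by (rule has_derivative_inner[OF d d])
  moreover have "(\<lambda>h. (x t - xs) \<bullet> (h *\<^sub>R v) + (h *\<^sub>R v) \<bullet> (x t - xs))
                  = (*) (2 * ((x t - xs) \<bullet> v))"
    by (simp add: fun_eq_iff inner_commute[of v "x t - xs"])
  ultimately show ?thesis
    unfolding has_field_derivative_def power2_norm_eq_inner v by simp
qed

lemma norm_square_dissipation_nonincreasing:
  fixes y :: "real \<Rightarrow> 'a::real_inner"
  assumes h_nonneg: "\<And>z. 0 \<le> h z"
    and deriv: "\<And>t. 0 \<le> t \<Longrightarrow> ((\<lambda>t. (norm (y t))\<^sup>2) has_real_derivative - h (y t)) (at t within {0..})"
    and "0 \<le> s" "s \<le> t"
  shows "norm (y t) \<le> norm (y s)"
proof -
  have "(norm (y t))\<^sup>2 \<le> (norm (y s))\<^sup>2"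
    using nonpos_derivative_imp_nonincreasing[OF deriv _ \<open>0 \<le> s\<close> \<open>s \<le> t\<close>] h_nonneg by simp
  then show ?thesis
    by (rule power2_le_imp_le) simp
qed

lemma norm_square_dissipation_enters_ball:
  fixes y :: "real \<Rightarrow> 'a::euclidean_space"
  assumes h_cont: "continuous_on UNIV h"
    and h_nonneg: "\<And>z. 0 \<le> h z" and h_pos: "\<And>z. z \<noteq> 0 \<Longrightarrow> 0 < h z"
    and deriv: "\<And>t. 0 \<le> t \<Longrightarrow> ((\<lambda>t. (norm (y t))\<^sup>2) has_real_derivative - h (y t)) (at t within {0..})"
    and "0 < e"
  shows "\<exists>T\<ge>0. norm (y T) < e"
proof (rule ccontr)
  assume "\<not> ?thesis"
  then have far: "e \<le> norm (y t)" if "0 \<le> t" for t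
    using that by (simp add: not_less)
  define K where "K = cball (0::'a) (norm (y 0)) - ball 0 e"
  have yK: "y t \<in> K" if "0 \<le> t" for t
    using far[OF that] norm_square_dissipation_nonincreasing[OF h_nonneg deriv order_refl that]
    unfolding K_def by auto
  have "compact K"
    unfolding K_def by (intro compact_diff compact_cball open_ball)
  moreover have "K \<noteq> {}"
    using yK[of 0] by auto
  ultimately obtain z0 where z0: "z0 \<in> K" "\<And>z. z \<in> K \<Longrightarrow> h z0 \<le> h z"
    using continuous_attains_inf[of K h] continuous_on_subset[OF h_cont, of K] by auto
  define \<delta> where "\<delta> = h z0"
  have "z0 \<noteq> 0"
    using z0(1) \<open>0 < e\<close> unfolding K_def by auto
  then have "0 < \<delta>"
    unfolding \<delta>_def by (rule h_pos)
  \<comment> \<open>\<open>\<delta>\<close> bounds \<open>h\<close> below along the trajectory, so the squared norm decreases at rate \<open>\<delta>\<close>.\<close>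
  define T where "T = (norm (y 0))\<^sup>2 / \<delta> + 1"
  have "(norm (y T))\<^sup>2 + \<delta> * T \<le> (norm (y 0))\<^sup>2 + \<delta> * 0"
  proof (rule nonpos_derivative_imp_nonincreasing[where f = "\<lambda>t. (norm (y t))\<^sup>2 + \<delta> * t"
                 and f' = "\<lambda>t. - h (y t) + \<delta>"])
    show "((\<lambda>t. (norm (y t))\<^sup>2 + \<delta> * t) has_real_derivative - h (y t) + \<delta>) (at t within {0..})"
      if "0 \<le> t" for t
      using deriv[OF that] DERIV_cmult_Id by (rule DERIV_add)
    show "- h (y t) + \<delta> \<le> 0" if "0 \<le> t" for t
      using z0(2)[OF yK[OF that]] unfolding \<delta>_def by simp
    show "0 \<le> T"
      unfolding T_def using \<open>0 < \<delta>\<close> by simp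
  qed simp
  moreover have "\<delta> * T = (norm (y 0))\<^sup>2 + \<delta>"
    unfolding T_def using \<open>0 < \<delta>\<close> by (simp add: field_simps)
  moreover have "0 \<le> (norm (y T))\<^sup>2"
    by simp
  ultimately show False
    using \<open>0 < \<delta>\<close> by linarith
qed

lemma norm_square_dissipation_tendsto_zero:
  fixes y :: "real \<Rightarrow> 'a::euclidean_space"
  assumes h_cont: "continuous_on UNIV h"
    and h_nonneg: "\<And>z. 0 \<le> h z" and h_pos: "\<And>z. z \<noteq> 0 \<Longrightarrow> 0 < h z"
    and deriv: "\<And>t. 0 \<le> t \<Longrightarrow> ((\<lambda>t. (norm (y t))\<^sup>2) has_real_derivative - h (y t)) (at t within {0..})"
  shows "(y \<longlongrightarrow> 0) at_top"
proof (rule tendstoI)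
  fix e :: real assume "0 < e"
  then obtain T where T: "0 \<le> T" "norm (y T) < e"
    using norm_square_dissipation_enters_ball[OF assms] by blast
  have "dist (y t) 0 < e" if "T \<le> t" for t
    using norm_square_dissipation_nonincreasing[OF h_nonneg deriv T(1) that] T(2) by simp
  then show "\<forall>\<^sub>F t in at_top. dist (y t) 0 < e"
    unfolding eventually_at_top_linorder by blast
qed

lemma flow_tendsto_equilibrium:
  fixes f :: "real^'n \<Rightarrow> real" and J :: "real^'n^'n"
  assumes grad: "\<And>x. (f has_derivative (\<lambda>h. g x \<bullet> h)) (at x)"
    and cont: "continuous_on UNIV g"
    and strict_cvx: "strictly_convex_on UNIV f"
    and skew: "transpose J = - J"
    and eq: "g xs - J *v xs = b"
    and sol: "\<forall>t\<ge>0. (x has_vector_derivative (- g (x t) + J *v x t + b)) (at t within {0..})"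
  shows "(x \<longlongrightarrow> xs) at_top"
proof -
  define h where "h z = 2 * ((g (xs + z) - g xs) \<bullet> z)" for z
  have h_pos: "0 < h z" if "z \<noteq> 0" for z
    using strictly_convex_on_gradient_strictly_monotone[OF strict_cvx grad, of "xs + z" xs] that
    unfolding h_def by simp
  have h_nonneg: "0 \<le> h z" for z
    using h_pos[of z] by (cases "z = 0") (auto simp: h_def)
  have h_cont: "continuous_on UNIV h"
    unfolding h_def by (intro continuous_intros continuous_on_compose2[OF cont]) auto
  have "((\<lambda>t. x t - xs) \<longlongrightarrow> 0) at_top"
  proof (rule norm_square_dissipation_tendsto_zero[OF h_cont h_nonneg h_pos])
    fix t :: real assume "0 \<le> t"
    then show "((\<lambda>t. (norm (x t - xs))\<^sup>2) has_real_derivative - h (x t - xs)) (at t within {0..})"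
      using flow_distance_square_derivative[where g = g, OF skew eq] sol unfolding h_def by simp
  qed
  then show ?thesis
    by (simp add: LIM_zero_iff)
qed

theorem mainTheorem11:
  fixes \<psi> :: "real^'n \<Rightarrow> real"
    and grad\<psi> :: "real^'n \<Rightarrow> real^'n"
    and J :: "real^'n^'n"
    and B :: "real^'m^'n"
    and u :: "real^'m"
  assumes grad: "\<And>x. (\<psi> has_derivative (\<lambda>h. grad\<psi> x \<bullet> h)) (at x)"
    and C1: "continuous_on UNIV grad\<psi>"
    and strict_cvx: "strictly_convex_on UNIV \<psi>"
    and superlinear: "filterlim (\<lambda>x. \<psi> x / norm x) at_top at_infinity"
    and skew: "transpose J = - J"
  shows "\<exists>!x0 :: real^'n. \<forall>x :: real \<Rightarrow> real^'n.
           (\<forall>t\<ge>0. (x has_vector_derivative (- grad\<psi> (x t) + J *v x t + B *v u)) (at t within {0..}))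
           \<longrightarrow> (x \<longlongrightarrow> x0) at_top"
proof -
  have cvx: "convex_on UNIV \<psi>"
    using strict_cvx by (rule strictly_convex_on_imp_convex_on) simp
  obtain xs where xs: "grad\<psi> xs - J *v xs = B *v u"
    using surjD[OF surj_gradient_minus_skew[OF grad C1 cvx superlinear skew], of "B *v u"] by auto
  have "(x \<longlongrightarrow> xs) at_top"
    if "\<forall>t\<ge>0. (x has_vector_derivative (- grad\<psi> (x t) + J *v x t + B *v u)) (at t within {0..})"
    for x :: "real \<Rightarrow> real^'n"
    by (rule flow_tendsto_equilibrium[OF grad C1 strict_cvx skew xs that])
  moreover have "\<forall>t\<ge>0. ((\<lambda>t. xs) has_vector_derivative (- grad\<psi> xs + J *v xs + B *v u)) (at t within {0..})"
    using xs by (simp add: algebra_simps)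
  ultimately show ?thesis
    by (intro ex1I[of _ xs]) (auto dest!: spec[of _ "\<lambda>t. xs"] simp: tendsto_const_iff)
qed

end
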